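(* Let $n\ge 2$, $\varepsilon\in(0,1)$, and let $K\in T^n$ satisfy $(1-\varepsilon)D_n\subseteq \operatorname{conv}K\subseteq (1+\varepsilon)D_n$. Then \[ (1-\varepsilon)D_n\subseteq K+2\sqrt{\varepsilon}\,D_n . \]
   Context: $D_n$ denotes the closed Euclidean unit ball in $\mathbb R^n$; $\operatorname{conv}$ denotes convex hull and $+$ the Minkowski sum. A nonempty compact set $K\subset\mathbb R^n$ is called star shaped if $x\in K$ implies that the segment $[0,x]\subseteq K$; $T^n$ denotes the family of star shaped sets in $\mathbb R^n$. *)

theory Defs
  imports "HOL-Analysis.Analysis"
begin

definition star_shaped :: "'a::real_normed_vector set \<Rightarrow> bool" where
  "star_shaped K \<longleftrightarrow> K \<noteq> {} \<and> compact K \<and> (\<forall>x\<in>K. closed_segment 0 x \<subseteq> K)"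

definition minkowski_sum :: "'a::real_vector set \<Rightarrow> 'a set \<Rightarrow> 'a set" where
  "minkowski_sum A B = {a + b | a b. a \<in> A \<and> b \<in> B}"

end

theory Submission
  imports Defs
begin

text \<open>
  Fix a point \<open>y = \<rho> u\<close> with \<open>u\<close> a unit vector and \<open>0 \<le> \<rho> \<le> r\<close>. Since \<open>r u\<close> lies in the
  convex hull of \<open>K\<close>, some \<open>k \<in> K\<close> has \<open>u \<bullet> k \<ge> r\<close>, and \<open>|k| \<le> R\<close>. Star-shapedness puts the
  point \<open>t k\<close> with \<open>t (u \<bullet> k) = \<rho>\<close> into \<open>K\<close>; its component along \<open>u\<close> is \<open>y\<close>, so it lies
  at distance \<open>t \<surd>(|k|\<^sup>2 - (u \<bullet> k)\<^sup>2) \<le> \<surd>(R\<^sup>2 - r\<^sup>2)\<close>. For \<open>r = 1 - \<epsilon>\<close>,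
  \<open>R = 1 + \<epsilon>\<close> this is \<open>2\<surd>\<epsilon>\<close>.
\<close>

lemma minkowski_sum_cball_0:
  fixes K :: "'a::real_normed_vector set"
  shows "minkowski_sum K (cball 0 r) = (\<Union>p\<in>K. cball p r)"
proof (intro equalityI subsetI)
  fix y assume "y \<in> minkowski_sum K (cball 0 r)"
  then obtain p b where "y = p + b" "p \<in> K" "norm b \<le> r"
    unfolding minkowski_sum_def by auto
  then show "y \<in> (\<Union>p\<in>K. cball p r)" by (auto simp: dist_norm intro!: bexI[of _ p])
next
  fix y assume "y \<in> (\<Union>p\<in>K. cball p r)"
  then obtain p where p: "p \<in> K" "norm (y - p) \<le> r"
    by (auto simp: dist_norm norm_minus_commute)
  then have "y = p + (y - p)" "y - p \<in> cball 0 r" by auto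
  with p(1) show "y \<in> minkowski_sum K (cball 0 r)"
    unfolding minkowski_sum_def by blast
qed

lemma star_shaped_zero_mem: "star_shaped K \<Longrightarrow> 0 \<in> K"
  unfolding star_shaped_def by auto

lemma star_shaped_scaleR_mem:
  assumes "star_shaped K" "k \<in> K" "0 \<le> t" "t \<le> 1"
  shows "t *\<^sub>R k \<in> K"
proof -
  have "t *\<^sub>R k \<in> closed_segment 0 k"
    using assms(3,4) by (auto simp: closed_segment_def)
  then show ?thesis using assms(1,2) unfolding star_shaped_def by blast
qed

lemma convex_hull_inner_le_member:
  fixes u :: "'a::real_inner"
  assumes "x \<in> convex hull K"
  obtains k where "k \<in> K" "u \<bullet> x \<le> u \<bullet> k"
proof (rule ccontr)
  assume "\<not> thesis"
  with that have "K \<subseteq> {z. u \<bullet> z < u \<bullet> x}" by force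
  then have "convex hull K \<subseteq> {z. u \<bullet> z < u \<bullet> x}"
    by (intro hull_minimal) (auto simp: convex_halfspace_lt)
  with assms show False by blast
qed

lemma norm_diff_projection_square:
  fixes k u :: "'a::real_inner"
  assumes "norm u = 1"
  shows "(norm (k - (u \<bullet> k) *\<^sub>R u))\<^sup>2 = (norm k)\<^sup>2 - (u \<bullet> k)\<^sup>2"
proof -
  have "u \<bullet> u = 1" using assms by (simp add: dot_square_norm)
  then show ?thesis
    unfolding power2_norm_eq_inner
    by (simp add: inner_diff_left inner_diff_right inner_commute power2_eq_square)
qed

lemma star_shaped_near_ray:
  fixes u :: "'a::real_inner"
  assumes K: "star_shaped K" "k \<in> K"
    and u: "norm u = 1"
    and \<rho>: "0 \<le> \<rho>" "\<rho> \<le> u \<bullet> k"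
  obtains p where "p \<in> K" "dist p (\<rho> *\<^sub>R u) \<le> sqrt ((norm k)\<^sup>2 - (u \<bullet> k)\<^sup>2)"
proof
  define t where "t = \<rho> / (u \<bullet> k)"
  have t: "0 \<le> t" "t \<le> 1" using \<rho> by (auto simp: t_def divide_le_eq)
  show "t *\<^sub>R k \<in> K" using star_shaped_scaleR_mem[OF K t] .
  \<comment> \<open>if \<open>u \<bullet> k = 0\<close> then \<open>t = 0\<close> by the junk value of division, but then also \<open>\<rho> = 0\<close>\<close>
  have "\<rho> = t * (u \<bullet> k)" using \<rho> by (auto simp: t_def)
  then have "t *\<^sub>R k - \<rho> *\<^sub>R u = t *\<^sub>R (k - (u \<bullet> k) *\<^sub>R u)"
    by (simp add: scaleR_diff_right)
  then have "dist (t *\<^sub>R k) (\<rho> *\<^sub>R u) = t * norm (k - (u \<bullet> k) *\<^sub>R u)"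
    using t by (simp add: dist_norm)
  also have "\<dots> \<le> norm (k - (u \<bullet> k) *\<^sub>R u)"
    using t by (simp add: mult_left_le_one_le)
  also have "\<dots> = sqrt ((norm k)\<^sup>2 - (u \<bullet> k)\<^sup>2)"
    by (simp flip: norm_diff_projection_square[OF u])
  finally show "dist (t *\<^sub>R k) (\<rho> *\<^sub>R u) \<le> sqrt ((norm k)\<^sup>2 - (u \<bullet> k)\<^sup>2)" .
qed

lemma star_shaped_cball_subset_thickening:
  fixes K :: "'a::euclidean_space set"
  assumes K: "star_shaped K"
    and r: "0 \<le> r"
    and inner: "cball 0 r \<subseteq> convex hull K"
    and outer: "convex hull K \<subseteq> cball 0 R"
  shows "cball 0 r \<subseteq> (\<Union>p\<in>K. cball p (sqrt (R\<^sup>2 - r\<^sup>2)))"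
proof
  fix y :: 'a
  assume y: "y \<in> cball 0 r"
  show "y \<in> (\<Union>p\<in>K. cball p (sqrt (R\<^sup>2 - r\<^sup>2)))"
  proof (cases "y = 0")
    case True
    obtain b :: 'a where b: "b \<in> Basis" using nonempty_Basis by blast
    then have "r *\<^sub>R b \<in> cball 0 r" using r by (simp add: norm_Basis)
    then have "r *\<^sub>R b \<in> cball 0 R" using inner outer by blast
    then have "r \<le> R" using b r by (simp add: norm_Basis)
    then show ?thesis using True star_shaped_zero_mem[OF K] r by force
  next
    case False
    define u where "u = y /\<^sub>R norm y"
    have u: "norm u = 1" and y_eq: "y = norm y *\<^sub>R u"
      using False by (simp_all add: u_def)
    have "r *\<^sub>R u \<in> convex hull K" using inner u r by auto
    then obtain k where k: "k \<in> K" "u \<bullet> (r *\<^sub>R u) \<le> u \<bullet> k"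
      by (rule convex_hull_inner_le_member)
    have "u \<bullet> u = 1" using u by (simp add: dot_square_norm)
    with k have uk: "r \<le> u \<bullet> k" by simp
    have "norm y \<le> u \<bullet> k" using y uk by simp
    then obtain p where p: "p \<in> K" "dist p y \<le> sqrt ((norm k)\<^sup>2 - (u \<bullet> k)\<^sup>2)"
      using star_shaped_near_ray[OF K(1) k(1) u norm_ge_zero] y_eq by metis
    have "norm k \<le> R" using k(1) outer hull_inc by fastforce
    then have "(norm k)\<^sup>2 - (u \<bullet> k)\<^sup>2 \<le> R\<^sup>2 - r\<^sup>2"
      using uk r by (intro diff_mono power_mono) auto
    then have "dist p y \<le> sqrt (R\<^sup>2 - r\<^sup>2)"
      using p(2) real_sqrt_le_mono order_trans by blast
    with p(1) show ?thesis by (auto simp: dist_commute)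
  qed
qed

theorem mainTheorem4:
  fixes K :: "'a::euclidean_space set" and \<epsilon> :: real
  assumes "DIM('a) \<ge> 2"
    and "0 < \<epsilon>" and "\<epsilon> < 1"
    and "star_shaped K"
    and "(\<lambda>x. (1 - \<epsilon>) *\<^sub>R x) ` cball 0 1 \<subseteq> convex hull K"
    and "convex hull K \<subseteq> (\<lambda>x. (1 + \<epsilon>) *\<^sub>R x) ` cball 0 1"
  shows "(\<lambda>x. (1 - \<epsilon>) *\<^sub>R x) ` cball 0 1
           \<subseteq> minkowski_sum K ((\<lambda>x. (2 * sqrt \<epsilon>) *\<^sub>R x) ` cball 0 1)"
proof -
  have balls: "(\<lambda>x. c *\<^sub>R x) ` cball 0 1 = cball (0::'a) c" if "0 < c" for c
    using that cball_scale[of c "0::'a" 1] by simp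
  have "sqrt ((1 + \<epsilon>)\<^sup>2 - (1 - \<epsilon>)\<^sup>2) = 2 * sqrt \<epsilon>"
    by (simp add: power2_eq_square algebra_simps real_sqrt_mult)
  then show ?thesis
    using star_shaped_cball_subset_thickening[of K "1 - \<epsilon>" "1 + \<epsilon>"] assms(2-6)
    by (simp add: balls minkowski_sum_cball_0)
qed

end
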